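(* If $\mathrm{Re}(z)<1/2$, then $$z\gamma(z)=-\log(1-z)+\sum_{n=1}^{\infty}\left(\frac{-z}{1-z}\right)^n\sum_{k=0}^{n}(-1)^{k+1}\binom{n}{k}\log(k+1).$$ Equivalently, if $|w|<1$, then $$w\gamma\!\left(\frac{-w}{1-w}\right)=-(1-w)\log(1-w)+(1-w)\sum_{n=1}^{\infty}w^n\sum_{k=0}^{n}(-1)^k\binom{n}{k}\log(k+1).$$
   Context: $\gamma(z)$ is the generalized-Euler-constant function: for $|z|\le1$, $\gamma(z)=\sum_{n=1}^{\infty} z^{n-1}\left(\frac{1}{n}-\log\frac{n+1}{n}\right)$, and for $z\in\mathbb{C}\setminus[1,\infty)$ it denotes the analytic continuation $\gamma(z)=\int_0^1\frac{1-x+\log x}{(1-xz)\log x}\,dx$. $\log$ is the principal branch. *)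

theory Defs
  imports "HOL-Analysis.Analysis"
begin

text \<open>Generalized Euler constant function, defined on the whole cut plane
  C minus [1,infinity) by its integral representation
  gamma(z) = integral_0^1 (1 - x + log x) / ((1 - x z) log x) dx.\<close>
definition gen_euler_gamma :: "complex \<Rightarrow> complex" where
  "gen_euler_gamma z =
     integral {0..1::real}
       (\<lambda>x. complex_of_real (1 - x + ln x) / ((1 - complex_of_real x * z) * complex_of_real (ln x)))"

end

theory Submission
  imports Defs
begin

text \<open>Writing (x^k - 1) / ln x as the integral of x^t over t in [0, k] and exchanging the
  two integrals gives ln (k + 1) = integral_0^1 (x^k - 1) / ln x dx. Hence the binomial transform
  a_n of ln (k + 1) equals integral_0^1 (1 - x)^n / ln x dx for n > 0, and since
  |(1 - x) / ln x| <= 1, for |w| < 1 the geometric series in w (1 - x) can be summed under the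
  integral: sum_n w^(n+1) a_(n+1) = integral_0^1 w (1 - x) / ((1 - w (1 - x)) ln x) dx.
  For z = -w / (1 - w) the integrand of w gamma(z) is (1 - w) times the sum of this integrand
  and w / (1 - w (1 - x)), whose integral is -Ln (1 - w). The map w -> -w / (1 - w) takes the
  unit disc onto the half plane Re z < 1/2.\<close>

lemma pow_minus_one_div_ln_bounds:
  fixes x :: real
  assumes "x \<in> {0..1}"
  shows "0 \<le> (x^k - 1) / ln x" and "(x^k - 1) / ln x \<le> real k"
proof -
  consider "x = 0 \<or> x = 1" | "0 < x" "x < 1" using assms by fastforce
  then have "0 \<le> (x^k - 1) / ln x \<and> (x^k - 1) / ln x \<le> real k"
  proof cases
    case 2
    then have "ln x < 0" by simp
    have "real k * ln x = ln (x^k)" using 2 by (simp add: ln_realpow)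
    also have "\<dots> \<le> x^k - 1" using 2 by (intro ln_le_minus_one) simp
    finally have "(x^k - 1) / ln x \<le> real k" using \<open>ln x < 0\<close> by (simp add: neg_divide_le_eq)
    moreover have "x^k \<le> 1" using 2 by (simp add: power_le_one)
    ultimately show ?thesis using \<open>ln x < 0\<close> by (auto intro: divide_nonpos_neg)
  qed auto
  then show "0 \<le> (x^k - 1) / ln x" and "(x^k - 1) / ln x \<le> real k" by auto
qed

lemma integrable_on_Icc_if_bounded_continuous_on_Ioo:
  fixes f :: "real \<Rightarrow> 'b::euclidean_space"
  assumes "continuous_on {a<..<b} f" and "\<And>x. x \<in> {a<..<b} \<Longrightarrow> norm (f x) \<le> C"
  shows "f integrable_on {a..b}"
  unfolding integrable_on_Icc_iff_Ioo
proof (rule measurable_bounded_by_integrable_imp_integrable)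
  show "f \<in> borel_measurable (lebesgue_on {a<..<b})"
    using assms(1) by (rule continuous_imp_measurable_on_sets_lebesgue) auto
  show "(\<lambda>x. C) integrable_on {a<..<b}"
    using integrable_const_ivl integrable_on_Icc_iff_Ioo by blast
qed (use assms in auto)

lemma integrable_pow_minus_one_div_ln: "(\<lambda>x::real. (x^k - 1) / ln x) integrable_on {0..1}"
proof (rule integrable_on_Icc_if_bounded_continuous_on_Ioo)
  show "continuous_on {0<..<1} (\<lambda>x::real. (x^k - 1) / ln x)"
    by (intro continuous_intros) auto
  show "norm ((x^k - 1) / ln x) \<le> real k" if "x \<in> {0<..<1}" for x :: real
    using pow_minus_one_div_ln_bounds[of x k] that by auto
qed

lemma has_integral_powr_exponent:
  fixes x a b :: real
  assumes "0 < x" "x \<noteq> 1" "a \<le> b"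
  shows "((\<lambda>t. x powr t) has_integral (x powr b - x powr a) / ln x) {a..b}"
proof -
  have "((\<lambda>t. x powr t) has_integral (x powr b / ln x - x powr a / ln x)) {a..b}"
  proof (rule fundamental_theorem_of_calculus)
    fix t assume "t \<in> {a..b}"
    have "((\<lambda>t. x powr t / ln x) has_real_derivative x powr t) (at t)"
      using assms by (auto intro!: derivative_eq_intros)
    then show "((\<lambda>t. x powr t / ln x) has_vector_derivative x powr t) (at t within {a..b})"
      by (simp add: has_real_derivative_iff_has_vector_derivative has_vector_derivative_at_within)
  qed (use assms in simp)
  then show ?thesis by (simp add: diff_divide_distrib)
qed

lemma has_integral_powr_base:
  fixes a b t :: real
  assumes "0 < a" "a \<le> b" "t \<noteq> -1"
  shows "((\<lambda>x. x powr t) has_integral (b powr (t+1) - a powr (t+1)) / (t+1)) {a..b}"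
proof -
  have "((\<lambda>x. x powr t) has_integral (b powr (t+1) / (t+1) - a powr (t+1) / (t+1))) {a..b}"
  proof (rule fundamental_theorem_of_calculus)
    fix x assume "x \<in> {a..b}"
    then have "0 < x" using assms by auto
    have "((\<lambda>x. x powr (t+1) / (t+1)) has_real_derivative (t+1) * x powr (t+1-1) / (t+1)) (at x)"
      using \<open>0 < x\<close> by (intro DERIV_cdivide has_real_derivative_powr)
    then have "((\<lambda>x. x powr (t+1) / (t+1)) has_real_derivative x powr t) (at x)"
      using assms(3) by simp
    then show "((\<lambda>x. x powr (t+1) / (t+1)) has_vector_derivative x powr t) (at x within {a..b})"
      by (simp add: has_real_derivative_iff_has_vector_derivative has_vector_derivative_at_within)
  qed (use assms in simp)
  then show ?thesis by (simp add: diff_divide_distrib)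
qed

lemma has_integral_inverse_plus_one:
  fixes a b :: real
  assumes "-1 < a" "a \<le> b"
  shows "((\<lambda>t. 1 / (t + 1)) has_integral ln (b + 1) - ln (a + 1)) {a..b}"
proof (rule fundamental_theorem_of_calculus)
  fix t assume "t \<in> {a..b}"
  then have "((\<lambda>t. ln (t + 1)) has_real_derivative 1 / (t + 1)) (at t)"
    using assms by (auto intro!: derivative_eq_intros)
  then show "((\<lambda>t. ln (t + 1)) has_vector_derivative 1 / (t + 1)) (at t within {a..b})"
    by (simp add: has_real_derivative_iff_has_vector_derivative has_vector_derivative_at_within)
qed (use assms in simp)

lemma integral_pow_minus_one_div_ln_from:
  fixes e :: real
  assumes e: "0 < e" "e < 1"
  shows "integral {e..1} (\<lambda>x. (x^k - 1) / ln x)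
           = ln (real k + 1) - integral {0..real k} (\<lambda>t. e powr (t+1) / (t+1))"
proof -
  \<comment> \<open>Cutting off [0, e] is needed: (x, t) \<mapsto> x powr t is discontinuous at (0, 0).\<close>
  have "continuous_on (cbox (e, 0) (1, real k)) (\<lambda>p. exp (snd p * ln (fst p)))"
    using e by (intro continuous_intros) (auto simp: cbox_Pair_iff)
  moreover have "exp (snd p * ln (fst p)) = (\<lambda>(x, t). x powr t) p"
    if "p \<in> cbox (e, 0) (1, real k)" for p
    using that e by (auto simp: cbox_Pair_iff powr_def split: prod.splits)
  ultimately have "continuous_on (cbox (e, 0) (1, real k)) (\<lambda>(x, t). x powr t)"
    using continuous_on_eq by blast
  then have Fubini: "integral {e..1} (\<lambda>x. integral {0..real k} (\<lambda>t. x powr t))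
      = integral {0..real k} (\<lambda>t. integral {e..1} (\<lambda>x. x powr t))"
    by (metis (no_types) integral_swap_continuous interval_cbox)
  have G: "(\<lambda>t. e powr (t+1) / (t+1)) integrable_on {0..real k}"
    using e by (intro integrable_continuous_interval continuous_intros) auto
  have "integral {e..1} (\<lambda>x. (x^k - 1) / ln x)
      = integral {e..1} (\<lambda>x. integral {0..real k} (\<lambda>t. x powr t))"
  proof (rule integral_spike[of "{1}"])
    fix x assume "x \<in> {e..1} - {1}"
    then have "((\<lambda>t. x powr t) has_integral (x^k - 1) / ln x) {0..real k}"
      using has_integral_powr_exponent[of x 0 "real k"] e by (simp add: powr_realpow)
    then show "integral {0..real k} (\<lambda>t. x powr t) = (x^k - 1) / ln x"
      by (rule integral_unique)
  qed auto
  also have "\<dots> = integral {0..real k} (\<lambda>t. integral {e..1} (\<lambda>x. x powr t))"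
    by (rule Fubini)
  also have "\<dots> = integral {0..real k} (\<lambda>t. 1 / (t + 1) - e powr (t+1) / (t+1))"
    using has_integral_powr_base[of e 1] e
    by (intro integral_cong integral_unique) (auto simp: diff_divide_distrib)
  also have "\<dots> = ln (real k + 1) - integral {0..real k} (\<lambda>t. e powr (t+1) / (t+1))"
    using has_integral_inverse_plus_one[of 0 "real k"] G
    by (intro integral_unique has_integral_diff) auto
  finally show ?thesis .
qed

lemma integral_pow_minus_one_div_ln_approx:
  fixes e :: real
  assumes e: "0 < e" "e < 1"
  shows "\<bar>integral {0..1} (\<lambda>x. (x^k - 1) / ln x) - ln (real k + 1)\<bar> \<le> 2 * real k * e"
proof -
  let ?f = "\<lambda>x::real. (x^k - 1) / ln x"
  have split: "integral {0..1} ?f = integral {0..e} ?f + integral {e..1} ?f"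
    using e integrable_pow_minus_one_div_ln
    by (intro Henstock_Kurzweil_Integration.integral_combine[symmetric]) auto
  have head_integrable: "?f integrable_on {0..e}"
    using e by (intro integrable_subinterval_real[OF integrable_pow_minus_one_div_ln]) auto
  have head: "\<bar>integral {0..e} ?f\<bar> \<le> real k * e"
    using has_integral_bound_real[OF _ finite.emptyI integrable_integral[OF head_integrable], of "real k"]
      pow_minus_one_div_ln_bounds[of _ k] e
    by fastforce
  have "norm (integral {0..real k} (\<lambda>t. e powr (t+1) / (t+1))) \<le> e * (real k - 0)"
  proof (rule integral_bound)
    show "continuous_on {0..real k} (\<lambda>t. e powr (t+1) / (t+1))"
      using e by (intro continuous_intros) auto
    fix t :: real assume "t \<in> {0..real k}"
    then have "0 \<le> t" by simp
    have "e powr (t+1) \<le> e powr 1" using e \<open>0 \<le> t\<close> by (intro powr_mono') auto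
    also have "\<dots> \<le> e * (t+1)" using e \<open>0 \<le> t\<close> by simp
    finally show "norm (e powr (t+1) / (t+1)) \<le> e"
      using \<open>0 \<le> t\<close> by (simp add: divide_le_eq)
  qed simp
  then have tail: "\<bar>integral {0..real k} (\<lambda>t. e powr (t+1) / (t+1))\<bar> \<le> real k * e"
    by (simp add: mult.commute)
  show ?thesis
    using split integral_pow_minus_one_div_ln_from[OF e, of k] head tail by linarith
qed

theorem has_integral_pow_minus_one_div_ln:
  "((\<lambda>x::real. (x^k - 1) / ln x) has_integral ln (real k + 1)) {0..1}"
proof -
  define D where "D = \<bar>integral {0..1} (\<lambda>x::real. (x^k - 1) / ln x) - ln (real k + 1)\<bar>"
  have "D \<le> \<epsilon>" if "\<epsilon> > 0" for \<epsilon>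
  proof -
    define e where "e = min (1/2) (\<epsilon> / (2 * real k + 1))"
    have e: "0 < e" "e < 1" using that by (auto simp: e_def)
    have "D \<le> 2 * real k * e"
      unfolding D_def by (rule integral_pow_minus_one_div_ln_approx[OF e])
    also have "\<dots> \<le> (2 * real k + 1) * (\<epsilon> / (2 * real k + 1))"
      using e by (intro mult_mono) (auto simp: e_def)
    also have "\<dots> = \<epsilon>" by simp
    finally show ?thesis .
  qed
  then have "D = 0" using D_def by (metis abs_ge_zero dense_ge order_antisym)
  then show ?thesis
    using integrable_pow_minus_one_div_ln[of k] by (simp add: D_def has_integral_integral)
qed

definition binomial_transform_ln :: "nat \<Rightarrow> real" where
  "binomial_transform_ln n = (\<Sum>k=0..n. (-1)^k * real (n choose k) * ln (real k + 1))"

lemma has_integral_one_minus_pow_div_ln: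
  assumes "0 < n"
  shows "((\<lambda>x::real. (1 - x)^n / ln x) has_integral binomial_transform_ln n) {0..1}"
proof -
  define a where "a k = (-1)^k * real (n choose k)" for k
  have "((\<lambda>x. \<Sum>k=0..n. a k * ((x^k - 1) / ln x)) has_integral binomial_transform_ln n) {0..1}"
    unfolding binomial_transform_ln_def a_def
    by (intro has_integral_sum has_integral_mult_right has_integral_pow_minus_one_div_ln) auto
  moreover have "(\<Sum>k=0..n. a k * ((x^k - 1) / ln x)) = (1 - x)^n / ln x" for x :: real
  proof -
    have "(1 - x)^n = (-x + 1)^n" by simp
    also have "\<dots> = (\<Sum>k\<le>n. real (n choose k) * (-x)^k * 1^(n-k))"
      by (rule binomial_ring)
    also have "\<dots> = (\<Sum>k=0..n. a k * x^k)"
      unfolding atLeast0AtMost a_def by (intro sum.cong refl) (simp add: power_minus[of x])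
    finally have binomial: "(1 - x)^n = (\<Sum>k=0..n. a k * x^k)" .
    have alternating: "(\<Sum>k=0..n. a k) = 0"
      using choose_alternating_sum[OF assms] by (simp add: atLeast0AtMost a_def)
    have "(\<Sum>k=0..n. a k * ((x^k - 1) / ln x)) = (\<Sum>k=0..n. a k * x^k - a k) / ln x"
      unfolding sum_divide_distrib
      by (intro sum.cong refl) (simp add: right_diff_distrib diff_divide_distrib)
    also have "\<dots> = (1 - x)^n / ln x"
      by (simp only: sum_subtractf binomial alternating diff_zero)
    finally show ?thesis .
  qed
  ultimately show ?thesis by simp
qed

lemma abs_one_minus_div_ln_le_one:
  fixes x :: real
  assumes "x \<in> {0..1}"
  shows "\<bar>(1 - x) / ln x\<bar> \<le> 1"
proof -
  consider "x = 0 \<or> x = 1" | "0 < x" "x < 1" using assms by fastforce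
  then show ?thesis
  proof cases
    case 2
    then have "ln x < 0" by simp
    have "\<bar>(1 - x) / ln x\<bar> = (1 - x) / - ln x"
      using 2 \<open>ln x < 0\<close> by (simp add: abs_divide)
    also have "\<dots> \<le> 1"
      using ln_le_minus_one[of x] 2 \<open>ln x < 0\<close> by (subst pos_divide_le_eq) auto
    finally show ?thesis .
  qed auto
qed

lemma norm_mult_one_minus_less_one:
  fixes w :: complex and x :: real
  assumes "norm w < 1" "x \<in> {0..1}"
  shows "norm (w * of_real (1 - x)) < 1"
proof -
  have "norm (w * of_real (1 - x)) = norm w * (1 - x)"
    using assms(2) by (simp only: norm_mult norm_of_real) simp
  also have "\<dots> \<le> norm w"
    using assms(2) by (simp add: mult_left_le)
  finally have "norm (w * of_real (1 - x)) \<le> norm w" .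
  then show ?thesis using assms(1) by linarith
qed

lemma sums_power_Suc_divide:
  fixes q c :: "'a::real_normed_field"
  assumes "norm q < 1"
  shows "(\<lambda>n. q^Suc n / c) sums (q / ((1 - q) * c))"
proof -
  have "(\<lambda>n. q * q^n / c) sums (q * (1 / (1 - q)) / c)"
    using assms by (intro sums_divide sums_mult geometric_sums)
  then show ?thesis by simp
qed

lemma norm_power_Suc_div_ln_le:
  fixes w :: complex and x :: real
  assumes w: "norm w < 1" and x: "x \<in> {0..1}"
  shows "norm ((w * of_real (1 - x))^Suc n / of_real (ln x)) \<le> norm w ^ n"
proof -
  have "(w * of_real (1 - x))^Suc n / of_real (ln x) = w^Suc n * of_real ((1 - x)^n * ((1 - x) / ln x))"
    by (simp add: power_mult_distrib mult_ac)
  then have "norm ((w * of_real (1 - x))^Suc n / of_real (ln x))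
      = norm w ^ Suc n * ((1 - x)^n * \<bar>(1 - x) / ln x\<bar>)"
    using x by (simp only: norm_mult norm_power norm_of_real abs_mult) simp
  also have "\<dots> \<le> norm w ^ Suc n"
    using x abs_one_minus_div_ln_le_one[OF x]
    by (intro mult_left_le mult_le_one power_le_one) auto
  also have "\<dots> \<le> norm w ^ n" using w by (simp add: mult_left_le_one_le)
  finally show ?thesis .
qed

lemma sums_binomial_transform_ln_integral:
  fixes w :: complex
  assumes w: "norm w < 1"
  defines "S \<equiv> \<lambda>x. w * of_real (1 - x) / ((1 - w * of_real (1 - x)) * of_real (ln x))"
  shows "S integrable_on {0..1}"
    and "(\<lambda>n. w^Suc n * of_real (binomial_transform_ln (Suc n))) sums integral {0..1} S"
proof -
  define t where "t = (\<lambda>n (x::real). (w * of_real (1 - x))^Suc n / of_real (ln x))"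
  have "((\<lambda>x. w^Suc n * of_real ((1 - x)^Suc n / ln x))
          has_integral w^Suc n * of_real (binomial_transform_ln (Suc n))) {0..1}" for n
    by (intro has_integral_mult_right has_integral_of_real has_integral_one_minus_pow_div_ln) simp
  moreover have "t n = (\<lambda>x. w^Suc n * of_real ((1 - x)^Suc n / ln x))" for n
    by (simp add: t_def fun_eq_iff power_mult_distrib)
  ultimately have partial_sums_integral: "((\<lambda>x. \<Sum>n<N. t n x) has_integral
      (\<Sum>n<N. w^Suc n * of_real (binomial_transform_ln (Suc n)))) {0..1}" for N
    by (intro has_integral_sum) auto
  have partial_sums_bound: "norm (\<Sum>n<N. t n x) \<le> 1 / (1 - norm w)" if "x \<in> {0..1}" for N x
  proof -
    have "norm (\<Sum>n<N. t n x) \<le> (\<Sum>n<N. norm w ^ n)"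
      unfolding t_def using norm_power_Suc_div_ln_le[OF w that] by (intro sum_norm_le)
    also have "\<dots> \<le> (\<Sum>n. norm w ^ n)"
      using w by (intro sum_le_suminf summable_geometric) auto
    also have "\<dots> = 1 / (1 - norm w)" using w by (simp add: suminf_geometric)
    finally show ?thesis .
  qed
  \<comment> \<open>This holds on all of [0, 1]: at x = 0 and x = 1 we have ln x = 0 (ln 0 = 0 by
    convention), so both sides are 0 by division by zero.\<close>
  have "(\<lambda>n. t n x) sums S x" if "x \<in> {0..1}" for x
    unfolding t_def S_def using norm_mult_one_minus_less_one[OF w that] by (rule sums_power_Suc_divide)
  note dominated = dominated_convergence[OF has_integral_integrable[OF partial_sums_integral]
      integrable_const_ivl partial_sums_bound this[unfolded sums_def]]
  show "S integrable_on {0..1}"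
    by (rule dominated(1))
  show "(\<lambda>n. w^Suc n * of_real (binomial_transform_ln (Suc n))) sums integral {0..1} S"
    using dominated(2) unfolding sums_def integral_unique[OF partial_sums_integral] .
qed

lemma has_integral_Ln_one_minus:
  fixes w :: complex
  assumes w: "norm w < 1"
  shows "((\<lambda>x. w / (1 - w * of_real (1 - x))) has_integral - Ln (1 - w)) {0..1}"
proof -
  have "((\<lambda>x. w / (1 - w * of_real (1 - x))) has_integral
          Ln (1 - w * of_real (1 - 1)) - Ln (1 - w * of_real (1 - 0))) {0..1}"
  proof (rule fundamental_theorem_of_calculus)
    fix x :: real assume x: "x \<in> {0..1}"
    have "Re (w * of_real (1 - x)) < 1"
      using norm_mult_one_minus_less_one[OF w x] complex_Re_le_cmod le_less_trans by blast
    then have "1 - w * (1 - of_real x) \<notin> \<real>\<^sub>\<le>\<^sub>0"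
      by (auto simp: complex_nonpos_Reals_iff)
    then have "((\<lambda>y. Ln (1 - w * (1 - y))) has_field_derivative w / (1 - w * (1 - of_real x)))
                 (at (of_real x))"
      by (auto intro!: derivative_eq_intros simp: field_simps)
    from has_vector_derivative_real_field[OF this]
    show "((\<lambda>x. Ln (1 - w * of_real (1 - x))) has_vector_derivative w / (1 - w * of_real (1 - x)))
            (at x within {0..1})"
      by (simp add: has_vector_derivative_at_within)
  qed simp
  then show ?thesis by simp
qed

lemma gen_euler_gamma_disc_series:
  fixes w :: complex
  assumes w: "norm w < 1"
  shows "(\<lambda>n. w^Suc n * of_real (binomial_transform_ln (Suc n))) sums
           ((w * gen_euler_gamma (- w / (1 - w)) + (1 - w) * Ln (1 - w)) / (1 - w))"
proof -
  define A where "A = (\<lambda>x::real. w / (1 - w * of_real (1 - x)))"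
  define S where "S = (\<lambda>x::real. w * of_real (1 - x) / ((1 - w * of_real (1 - x)) * of_real (ln x)))"
  have "1 - w \<noteq> 0" using w by auto
  have field_identity: "w * ((1 - X + L) / ((D / (1 - w)) * L)) = (1 - w) * (w / D + w * (1 - X) / (D * L))"
    if "D \<noteq> 0" "L \<noteq> 0" for D X L :: complex
    using that \<open>1 - w \<noteq> 0\<close> by (simp add: field_simps)
  have integrand: "w * (of_real (1 - x + ln x) / ((1 - of_real x * (- w / (1 - w))) * of_real (ln x)))
      = (1 - w) * (A x + S x)" if "x \<in> {0..1} - {0, 1}" for x
  proof -
    have "norm (w * of_real (1 - x)) < 1"
      using that norm_mult_one_minus_less_one[OF w] by auto
    then have "1 - w * of_real (1 - x) \<noteq> 0" by auto
    moreover have "complex_of_real (ln x) \<noteq> 0" using that by auto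
    moreover have "1 - of_real x * (- w / (1 - w)) = (1 - w * of_real (1 - x)) / (1 - w)"
      using \<open>1 - w \<noteq> 0\<close> by (simp add: field_simps)
    ultimately show ?thesis
      using field_identity by (simp add: A_def S_def)
  qed
  have "w * gen_euler_gamma (- w / (1 - w)) = integral {0..1} (\<lambda>x. (1 - w) * (A x + S x))"
    unfolding gen_euler_gamma_def integral_mult_right[symmetric]
    by (rule integral_spike[of "{0, 1}"]) (use integrand in auto)
  also have "\<dots> = (1 - w) * (- Ln (1 - w) + integral {0..1} S)"
    using has_integral_Ln_one_minus[OF w] sums_binomial_transform_ln_integral(1)[OF w]
    by (simp add: A_def S_def integral_add integral_unique has_integral_integrable)
  finally have "integral {0..1} S = (w * gen_euler_gamma (- w / (1 - w)) + (1 - w) * Ln (1 - w)) / (1 - w)"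
    using \<open>1 - w \<noteq> 0\<close> by (simp add: field_simps)
  then show ?thesis
    using sums_binomial_transform_ln_integral(2)[OF w] by (simp add: S_def)
qed

lemma gen_euler_gamma_half_plane_series:
  fixes z :: complex
  assumes z: "Re z < 1/2"
  shows "(\<lambda>n. (- z / (1 - z))^Suc n * of_real (- binomial_transform_ln (Suc n))) sums
           (z * gen_euler_gamma z + Ln (1 - z))"
proof -
  define w where "w = - z / (1 - z)"
  have "1 - z \<noteq> 0" using z by auto
  have "norm z ^ 2 < norm (1 - z) ^ 2"
    using z unfolding cmod_power2 by (simp add: power2_eq_square algebra_simps)
  then have "norm w < 1"
    using \<open>1 - z \<noteq> 0\<close> by (simp add: w_def norm_divide power2_less_imp_less)
  have one_minus_w: "1 - w = inverse (1 - z)"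
    using \<open>1 - z \<noteq> 0\<close> by (simp add: w_def field_simps)
  have "- w / (1 - w) = z"
    using \<open>1 - z \<noteq> 0\<close> by (simp add: one_minus_w w_def field_simps)
  moreover have "Ln (1 - w) = - Ln (1 - z)"
    using z unfolding one_minus_w by (intro Ln_inverse) (simp add: complex_nonpos_Reals_iff)
  moreover have "(w * gen_euler_gamma z + (1 - w) * - Ln (1 - z)) / (1 - w)
      = - (z * gen_euler_gamma z + Ln (1 - z))"
  proof -
    have "1 - w \<noteq> 0" using \<open>1 - z \<noteq> 0\<close> by (simp add: one_minus_w)
    then have "(w * gen_euler_gamma z + (1 - w) * - Ln (1 - z)) / (1 - w)
        = w / (1 - w) * gen_euler_gamma z - Ln (1 - z)"
      by (simp add: field_simps)
    also have "w / (1 - w) = - z"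
      unfolding one_minus_w using \<open>1 - z \<noteq> 0\<close> by (simp add: w_def)
    finally show ?thesis by simp
  qed
  ultimately have sum_w: "(w * gen_euler_gamma (- w / (1 - w)) + (1 - w) * Ln (1 - w)) / (1 - w)
      = - (z * gen_euler_gamma z + Ln (1 - z))"
    by (simp only:)
  show ?thesis
    using sums_minus[OF gen_euler_gamma_disc_series[OF \<open>norm w < 1\<close>]]
    unfolding sum_w minus_minus by (simp add: w_def)
qed

lemma of_real_binomial_transform_ln:
  "(of_real (binomial_transform_ln n) :: 'a::real_algebra_1)
     = (\<Sum>k=0..n. (-1)^k * of_nat (n choose k) * of_real (ln (real k + 1)))"
  by (simp add: binomial_transform_ln_def)

lemma of_real_uminus_binomial_transform_ln:
  "(of_real (- binomial_transform_ln n) :: 'a::real_algebra_1)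
     = (\<Sum>k=0..n. (-1)^(k + 1) * of_nat (n choose k) * of_real (ln (real k + 1)))"
  by (simp add: of_real_binomial_transform_ln sum_negf[symmetric])

theorem theorem9:
  shows "(\<forall>z::complex. Re z < 1/2 \<longrightarrow>
            (let f = (\<lambda>n::nat. ((- z) / (1 - z)) ^ (Suc n) *
                    (\<Sum>k=0..Suc n. (-1) ^ (k + 1) * of_nat (Suc n choose k) * complex_of_real (ln (real k + 1))))
             in summable f \<and> z * gen_euler_gamma z = - Ln (1 - z) + (\<Sum>n. f n)))
       \<and> (\<forall>w::complex. norm w < 1 \<longrightarrow>
            (let g = (\<lambda>n::nat. w ^ (Suc n) *
                    (\<Sum>k=0..Suc n. (-1) ^ k * of_nat (Suc n choose k) * complex_of_real (ln (real k + 1))))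
             in summable g \<and> w * gen_euler_gamma (- w / (1 - w)) =
                  - (1 - w) * Ln (1 - w) + (1 - w) * (\<Sum>n. g n)))"
proof -
  have cancel: "X = - (1 - w) * L + (1 - w) * ((X + (1 - w) * L) / (1 - w))"
    if "norm w < 1" for w X L :: complex
  proof -
    have "1 - w \<noteq> 0" using that by auto
    then show ?thesis by (simp add: field_simps)
  qed
  show ?thesis
    unfolding Let_def of_real_uminus_binomial_transform_ln[symmetric]
      of_real_binomial_transform_ln[symmetric]
    using gen_euler_gamma_half_plane_series gen_euler_gamma_disc_series cancel
    by (auto simp: sums_iff)
qed

end
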